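(* Let $g \ge h \ge 2$ be integers. There is a constant $c>0$ depending only on $g$ and $h$ such that for every positive integer $n$ there exists a weak-$C_h[g]$ set $A \subset \{1,2,\dots,n\}$ with $$|A| \ge c\, n^{\left(1-\frac{1}{h}\right)\left(1-\frac{1}{g}\right)\left(1+\frac{1}{hg-1}\right)}.$$
   Context: A set of integers $A$ is called a weak-$C_h[g]$ set if for every set $X$ of $h$ integers there do not exist $g$ distinct integers $k_1,\dots,k_g$ such that the translates $X+k_1,\dots,X+k_g$ are pairwise disjoint and all contained in $A$ (here $X+k=\{x+k : x\in X\}$). In words, $A$ contains no $g$ pairwise disjoint translates of a common $h$-element set. *)

theory Defs
  imports "HOL-Analysis.Analysis"
begin

definition translate :: "int set \<Rightarrow> int \<Rightarrow> int set" where
  "translate X k = (\<lambda>x. x + k) ` X"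

definition weak_Ch_g :: "nat \<Rightarrow> nat \<Rightarrow> int set \<Rightarrow> bool" where
  "weak_Ch_g h g A \<longleftrightarrow>
     \<not> (\<exists>X K. finite X \<and> card X = h \<and> finite K \<and> card K = g \<and>
           (\<forall>k\<in>K. translate X k \<subseteq> A) \<and>
           (\<forall>k\<in>K. \<forall>k'\<in>K. k \<noteq> k' \<longrightarrow> translate X k \<inter> translate X k' = {}))"

end

theory Submission
  imports Defs
begin

text \<open>Every configuration X + K with |X| = h, |K| = g is determined by
  h + g - 1 parameters once X is translated to contain 0 as its minimum, so {1..n} contains
  at most n^(h+g-1) of them, each of size hg. A random m-subset of {1..n} contains a fixed
  one with probability at most (m/n)^(hg); for m of order n^((h-1)(g-1)/(hg-1)) the
  expected number of configurations inside it is at most m/2, and deleting one point from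
  each of them leaves a weak-C_h[g] set of size at least m/2.\<close>

lemma card_supersets_of_card:
  assumes "finite U" "T \<subseteq> U" "card T \<le> m"
  shows "card {S. S \<subseteq> U \<and> card S = m \<and> T \<subseteq> S} = (card U - card T) choose (m - card T)"
proof -
  have fT: "finite T" using assms finite_subset by blast
  have eq: "{S. S \<subseteq> U \<and> card S = m \<and> T \<subseteq> S}
      = (\<lambda>R. R \<union> T) ` {R. R \<subseteq> U - T \<and> card R = m - card T}"
  proof (rule set_eqI, rule iffI)
    fix S assume S: "S \<in> {S. S \<subseteq> U \<and> card S = m \<and> T \<subseteq> S}"
    then have "card (S - T) = m - card T" using fT by (simp add: card_Diff_subset)
    moreover have "S = (S - T) \<union> T" using S by blast
    ultimately show "S \<in> (\<lambda>R. R \<union> T) ` {R. R \<subseteq> U - T \<and> card R = m - card T}"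
      using S by blast
  next
    fix S assume "S \<in> (\<lambda>R. R \<union> T) ` {R. R \<subseteq> U - T \<and> card R = m - card T}"
    then obtain R where R: "R \<subseteq> U - T" "card R = m - card T" "S = R \<union> T" by blast
    have "finite R" using R assms finite_subset by (metis finite_Diff)
    then have "card S = card R + card T" unfolding R(3) using R fT by (intro card_Un_disjoint) auto
    then show "S \<in> {S. S \<subseteq> U \<and> card S = m \<and> T \<subseteq> S}" using R assms by auto
  qed
  have "inj_on (\<lambda>R. R \<union> T) {R. R \<subseteq> U - T \<and> card R = m - card T}"
    by (rule inj_onI) blast
  then have "card {S. S \<subseteq> U \<and> card S = m \<and> T \<subseteq> S} = card {R. R \<subseteq> U - T \<and> card R = m - card T}"
    unfolding eq by (rule card_image)
  also have "\<dots> = card (U - T) choose (m - card T)" using assms by (simp add: n_subsets)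
  also have "card (U - T) = card U - card T" using assms fT by (simp add: card_Diff_subset)
  finally show ?thesis .
qed

lemma card_subsets_of_card_le_power:
  assumes "finite A"
  shows "card {S. S \<subseteq> A \<and> card S = k} \<le> card A ^ k"
  using n_subsets[OF assms] binomial_fact_pow[of "card A" k] fact_ge_1[of k, where 'a=nat]
  by (metis dual_order.trans mult_le_mono2 nat_mult_1_right)

lemma binomial_mult_power_le:
  fixes m n t :: nat
  assumes "t \<le> m" "m \<le> n"
  shows "real (m choose t) * real n ^ t \<le> real (n choose t) * real m ^ t"
proof -
  have falling: "real (k choose t) * fact t = (\<Prod>i<t. real k - real i)" for k
    using gbinomial_mult_fact'[of "real k" t] by (simp add: binomial_gbinomial atLeast0LessThan)
  have "real (m choose t) * real n ^ t * fact t = (\<Prod>i<t. (real m - real i) * real n)"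
    by (simp add: falling prod.distrib)
  also have "\<dots> \<le> (\<Prod>i<t. (real n - real i) * real m)"
  proof (rule prod_mono)
    fix i assume "i \<in> {..<t}"
    then have "real i * real n \<le> real m * real n" using assms(1) by (simp add: mult_right_mono)
    moreover have "real i * real m \<le> real i * real n" using assms(2) by (simp add: mult_left_mono)
    ultimately show "0 \<le> (real m - real i) * real n \<and> (real m - real i) * real n \<le> (real n - real i) * real m"
      by (simp add: algebra_simps)
  qed
  also have "\<dots> = real (n choose t) * real m ^ t * fact t"
    by (simp add: falling prod.distrib)
  finally show ?thesis by simp
qed

lemma card_supersets_mult_power_le:
  assumes "finite U" "card U = n" "T \<subseteq> U" "card T = t" "m \<le> n"
  shows "real (card {S. S \<subseteq> U \<and> card S = m \<and> T \<subseteq> S}) * real n ^ t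
    \<le> real (n choose m) * real m ^ t"
proof (cases "t \<le> m")
  case True
  have "real ((n - t) choose (m - t)) * real n ^ t * real (n choose t)
      = real (n choose m) * (real (m choose t) * real n ^ t)"
    using arg_cong[OF choose_mult[OF True assms(5)], of real] by (simp add: algebra_simps)
  also have "\<dots> \<le> real (n choose m) * (real (n choose t) * real m ^ t)"
    by (rule mult_left_mono[OF binomial_mult_power_le[OF True assms(5)]]) simp
  finally have "real ((n - t) choose (m - t)) * real n ^ t \<le> real (n choose m) * real m ^ t"
    using True assms(5) by (simp add: algebra_simps)
  then show ?thesis using card_supersets_of_card[OF assms(1,3)] True assms by simp
next
  case False
  have "card T \<le> card S" if "T \<subseteq> S" "S \<subseteq> U" for S
    using that assms(1) by (meson card_mono finite_subset)
  then have "{S. S \<subseteq> U \<and> card S = m \<and> T \<subseteq> S} = {}" using False assms(4) by fastforce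
  then show ?thesis by (simp del: Collect_empty_eq)
qed

subsection \<open>The deletion method\<close>

lemma exists_le_average:
  fixes f :: "'a \<Rightarrow> real"
  assumes "finite F" "F \<noteq> {}" "sum f F \<le> real (card F) * c"
  shows "\<exists>x\<in>F. f x \<le> c"
proof (rule ccontr)
  assume "\<not> (\<exists>x\<in>F. f x \<le> c)"
  then have "(\<Sum>x\<in>F. c) < sum f F" by (intro sum_strict_mono assms(1,2)) auto
  then show False using assms(3) by simp
qed

lemma exists_subset_avoiding_family:
  assumes "finite \<B>" "\<And>P. P \<in> \<B> \<Longrightarrow> P \<noteq> {}"
  shows "\<exists>A\<subseteq>S. card S \<le> card A + card \<B> \<and> (\<forall>P\<in>\<B>. \<not> P \<subseteq> A)"
proof -
  define D where "D = (\<lambda>P. SOME x. x \<in> P) ` \<B>"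
  have "card S - card D \<le> card (S - D)" by (rule diff_card_le_card_Diff) (simp add: D_def assms(1))
  moreover have "card D \<le> card \<B>" unfolding D_def using assms(1) by (rule card_image_le)
  moreover have "\<not> P \<subseteq> S - D" if "P \<in> \<B>" for P
    using that assms(2)[OF that] some_in_eq[of P] unfolding D_def by blast
  ultimately show ?thesis by (intro exI[of _ "S - D"]) auto
qed

lemma exists_large_subset_avoiding_family:
  fixes \<B> :: "'a set set"
  assumes U: "finite U" "card U = n" and "0 < n" "m \<le> n" and "0 < t"
    and \<B>: "finite \<B>" "\<And>P. P \<in> \<B> \<Longrightarrow> P \<subseteq> U \<and> card P = t"
    and few: "2 * real (card \<B>) * real m ^ t \<le> real m * real n ^ t"
  shows "\<exists>A\<subseteq>U. (\<forall>P\<in>\<B>. \<not> P \<subseteq> A) \<and> real m / 2 \<le> real (card A)"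
proof -
  define F where "F = {S. S \<subseteq> U \<and> card S = m}"
  define Bad where "Bad S = {P \<in> \<B>. P \<subseteq> S}" for S
  have fF: "finite F" unfolding F_def using U(1) by simp
  have cF: "card F = n choose m" unfolding F_def using n_subsets[OF U(1)] U(2) by simp
  have npos: "real n ^ t > 0" using \<open>0 < n\<close> by simp
  \<comment> \<open>First moment: an average m-subset of U contains at most m/2 members of the family.\<close>
  have "(\<Sum>S\<in>F. real (card (Bad S))) = (\<Sum>S\<in>F. \<Sum>P\<in>\<B>. of_bool (P \<subseteq> S))"
    using \<B>(1) by (simp add: Bad_def Int_def conj_commute)
  also have "\<dots> = (\<Sum>P\<in>\<B>. real (card {S. S \<subseteq> U \<and> card S = m \<and> P \<subseteq> S}))"
    using fF by (subst sum.swap) (simp add: F_def Int_def conj_assoc)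
  also have "\<dots> \<le> (\<Sum>P\<in>\<B>. real (n choose m) * real m ^ t / real n ^ t)"
    using card_supersets_mult_power_le[OF U _ _ \<open>m \<le> n\<close>] \<B>(2) npos
    by (intro sum_mono) (simp add: pos_le_divide_eq)
  also have "\<dots> = real (card F) * (2 * real (card \<B>) * real m ^ t / real n ^ t) / 2"
    using cF by simp
  also have "\<dots> \<le> real (card F) * real m / 2"
    using few npos by (intro divide_right_mono mult_left_mono) (simp_all add: pos_divide_le_eq)
  finally have "(\<Sum>S\<in>F. real (card (Bad S))) \<le> real (card F) * (real m / 2)" by simp
  moreover have "F \<noteq> {}" using cF \<open>m \<le> n\<close> by auto
  ultimately obtain S where S: "S \<in> F" "real (card (Bad S)) \<le> real m / 2"
    using exists_le_average[OF fF] by blast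
  have "finite (Bad S)" "\<And>P. P \<in> Bad S \<Longrightarrow> P \<noteq> {}"
    using \<B> \<open>0 < t\<close> by (auto simp: Bad_def) (metis card.empty less_irrefl)
  then obtain A where A: "A \<subseteq> S" "card S \<le> card A + card (Bad S)" "\<forall>P\<in>Bad S. \<not> P \<subseteq> A"
    using exists_subset_avoiding_family by blast
  have "\<forall>P\<in>\<B>. \<not> P \<subseteq> A" using A(1,3) unfolding Bad_def by blast
  moreover have "real m / 2 \<le> real (card A)" using A(2) S unfolding F_def by simp
  ultimately show ?thesis using A(1) S(1) unfolding F_def by blast
qed

subsection \<open>Configurations of disjoint translates\<close>

definition translates_union :: "int set \<Rightarrow> int set \<Rightarrow> int set" where
  "translates_union X K = (\<Union>k\<in>K. translate X k)"

definition disjoint_translates :: "nat \<Rightarrow> nat \<Rightarrow> int set \<Rightarrow> int set \<Rightarrow> bool" where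
  "disjoint_translates h g X K \<longleftrightarrow> finite X \<and> card X = h \<and> finite K \<and> card K = g \<and>
     (\<forall>k\<in>K. \<forall>k'\<in>K. k \<noteq> k' \<longrightarrow> translate X k \<inter> translate X k' = {})"

definition translate_patterns :: "nat \<Rightarrow> nat \<Rightarrow> nat \<Rightarrow> int set set" where
  "translate_patterns h g n = {translates_union X K | X K.
     disjoint_translates h g X K \<and> translates_union X K \<subseteq> {1..int n}}"

lemma weak_Ch_g_iff:
  "weak_Ch_g h g A \<longleftrightarrow> \<not> (\<exists>X K. disjoint_translates h g X K \<and> translates_union X K \<subseteq> A)"
  unfolding weak_Ch_g_def disjoint_translates_def translates_union_def UN_subset_iff
  by (simp add: conj_ac)

lemma translates_union_eq_image: "translates_union X K = (\<lambda>(x, k). x + k) ` (X \<times> K)"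
  unfolding translates_union_def translate_def by auto

lemma translates_union_shift:
  "translates_union ((\<lambda>x. x - c) ` X) ((\<lambda>k. k + c) ` K) = translates_union X K"
  unfolding translates_union_eq_image by (force simp: image_iff)

lemma card_translates_union:
  assumes "disjoint_translates h g X K"
  shows "card (translates_union X K) = h * g"
proof -
  have "card (translate X k) = card X" for k
    unfolding translate_def by (rule card_image) (simp add: inj_on_def)
  moreover have "card (translates_union X K) = (\<Sum>k\<in>K. card (translate X k))"
    using assms unfolding translates_union_def disjoint_translates_def
    by (intro card_UN_disjoint) (auto simp: translate_def)
  ultimately show ?thesis using assms by (simp add: disjoint_translates_def)
qed

lemma weak_Ch_g_if_card_less:
  assumes "finite A" "card A < h * g"
  shows "weak_Ch_g h g A"
  unfolding weak_Ch_g_iff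
  using card_translates_union card_mono[OF assms(1)] assms(2) by (metis not_le)

lemma translate_pattern_normal_form:
  assumes XK: "disjoint_translates h g X K" "translates_union X K \<subseteq> {1..int n}"
    and "1 \<le> h" "1 \<le> g"
  obtains Y L where "Y \<subseteq> {1..int n - 1}" "card Y = h - 1" "L \<subseteq> {1..int n}" "card L = g"
    "translates_union (insert 0 Y) L = translates_union X K"
proof -
  have fX: "finite X" and cX: "card X = h" and cK: "card K = g"
    using XK(1) unfolding disjoint_translates_def by auto
  obtain k0 where k0: "k0 \<in> K" using cK \<open>1 \<le> g\<close> by fastforce
  have "X \<noteq> {}" using cX \<open>1 \<le> h\<close> by auto
  define x0 where "x0 = Min X"
  have x0: "x0 \<in> X" "\<And>x. x \<in> X \<Longrightarrow> x0 \<le> x"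
    unfolding x0_def using fX \<open>X \<noteq> {}\<close> by auto
  have sums: "x + k \<in> {1..int n}" if "x \<in> X" "k \<in> K" for x k
    using that XK(2) unfolding translates_union_eq_image by force
  define X' where "X' = (\<lambda>x. x - x0) ` X"
  define L where "L = (\<lambda>k. k + x0) ` K"
  have X': "X' \<subseteq> {0..int n - 1}"
    unfolding X'_def using x0 sums[OF _ k0] sums[OF x0(1) k0] by fastforce
  have "0 \<in> X'" unfolding X'_def using x0(1) by force
  have "card X' = h" unfolding X'_def using cX by (simp add: card_image inj_on_def)
  show thesis
  proof (rule that)
    show "X' - {0} \<subseteq> {1..int n - 1}" using X' by auto
    show "card (X' - {0}) = h - 1" using \<open>card X' = h\<close> \<open>0 \<in> X'\<close> by simp
    show "L \<subseteq> {1..int n}" unfolding L_def using sums[OF x0(1)] by (force simp: add.commute)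
    show "card L = g" unfolding L_def using cK by (simp add: card_image inj_on_def)
    have "insert 0 (X' - {0}) = X'" using \<open>0 \<in> X'\<close> by blast
    then show "translates_union (insert 0 (X' - {0})) L = translates_union X K"
      unfolding X'_def L_def by (simp add: translates_union_shift)
  qed
qed

lemma
  assumes "1 \<le> h" "1 \<le> g"
  shows finite_translate_patterns: "finite (translate_patterns h g n)"
    and card_translate_patterns_le: "card (translate_patterns h g n) \<le> n ^ (h + g - 1)"
proof -
  define YS where "YS = {Y. Y \<subseteq> {1..int n - 1} \<and> card Y = h - 1}"
  define LS where "LS = {L. L \<subseteq> {1..int n} \<and> card L = g}"
  have sub: "translate_patterns h g n \<subseteq> (\<lambda>(Y, L). translates_union (insert 0 Y) L) ` (YS \<times> LS)"
  proof
    fix P assume "P \<in> translate_patterns h g n"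
    then obtain X K where "disjoint_translates h g X K" "translates_union X K \<subseteq> {1..int n}"
      "P = translates_union X K"
      unfolding translate_patterns_def by blast
    with assms show "P \<in> (\<lambda>(Y, L). translates_union (insert 0 Y) L) ` (YS \<times> LS)"
      by (elim translate_pattern_normal_form) (force simp: YS_def LS_def)+
  qed
  moreover have fin: "finite YS" "finite LS" unfolding YS_def LS_def by simp_all
  ultimately show "finite (translate_patterns h g n)" by (meson finite_SigmaI finite_imageI finite_subset)
  have "card YS \<le> n ^ (h - 1)"
    using card_subsets_of_card_le_power[of "{1..int n - 1}" "h - 1"] power_mono[of "n - 1" n "h - 1"]
    unfolding YS_def by (simp add: nat_diff_distrib')
  moreover have "card LS \<le> n ^ g"
    using card_subsets_of_card_le_power[of "{1..int n}" g] unfolding LS_def by simp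
  moreover have "h - 1 + g = h + g - 1" using assms by linarith
  ultimately have "card (YS \<times> LS) \<le> n ^ (h + g - 1)"
    by (metis card_cartesian_product power_add mult_le_mono)
  moreover have "card (translate_patterns h g n)
      \<le> card ((\<lambda>(Y, L). translates_union (insert 0 Y) L) ` (YS \<times> LS))"
    using fin by (intro card_mono[OF _ sub]) simp
  moreover have "card ((\<lambda>(Y, L). translates_union (insert 0 Y) L) ` (YS \<times> LS)) \<le> card (YS \<times> LS)"
    by (rule card_image_le) (simp add: fin)
  ultimately show "card (translate_patterns h g n) \<le> n ^ (h + g - 1)" by linarith
qed

lemma exists_weak_Ch_g_subset:
  assumes "1 \<le> h" "1 \<le> g" "1 \<le> n" "m \<le> n"
    and few: "2 * real n ^ (h + g - 1) * real m ^ (h * g - 1) \<le> real n ^ (h * g)"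
  shows "\<exists>A\<subseteq>{1..int n}. weak_Ch_g h g A \<and> real m / 2 \<le> real (card A)"
proof -
  have "h * g = Suc (h * g - 1)" using assms(1,2) by (simp add: Suc_le_eq)
  then have mt: "real m ^ (h * g) = real m * real m ^ (h * g - 1)" by (metis power_Suc)
  have card_le: "real (card (translate_patterns h g n)) \<le> real n ^ (h + g - 1)"
    using card_translate_patterns_le[OF assms(1,2)] by (metis of_nat_le_iff of_nat_power)
  have "2 * real (card (translate_patterns h g n)) * real m ^ (h * g)
      = real m * (2 * real (card (translate_patterns h g n)) * real m ^ (h * g - 1))"
    unfolding mt by (simp only: mult_ac)
  also have "\<dots> \<le> real m * (2 * real n ^ (h + g - 1) * real m ^ (h * g - 1))"
    using card_le by (intro mult_left_mono mult_right_mono) auto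
  also have "\<dots> \<le> real m * real n ^ (h * g)" using few by (simp add: mult_left_mono)
  finally have few_patterns:
    "2 * real (card (translate_patterns h g n)) * real m ^ (h * g) \<le> real m * real n ^ (h * g)" .
  have patterns: "P \<subseteq> {1..int n} \<and> card P = h * g" if "P \<in> translate_patterns h g n" for P
  proof -
    from that obtain X K where "disjoint_translates h g X K" "P = translates_union X K"
      "translates_union X K \<subseteq> {1..int n}"
      unfolding translate_patterns_def by blast
    then show ?thesis using card_translates_union by simp
  qed
  have "\<exists>A\<subseteq>{1..int n}. (\<forall>P\<in>translate_patterns h g n. \<not> P \<subseteq> A) \<and> real m / 2 \<le> real (card A)"
    using finite_translate_patterns[OF assms(1,2)] assms
    by (intro exists_large_subset_avoiding_family[OF _ _ _ _ _ _ patterns few_patterns]) simp_all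
  then obtain A where A: "A \<subseteq> {1..int n}" "\<forall>P\<in>translate_patterns h g n. \<not> P \<subseteq> A"
    "real m / 2 \<le> real (card A)"
    by blast
  have "weak_Ch_g h g A"
    unfolding weak_Ch_g_iff
  proof
    assume "\<exists>X K. disjoint_translates h g X K \<and> translates_union X K \<subseteq> A"
    then obtain X K where "disjoint_translates h g X K" "translates_union X K \<subseteq> A" by blast
    moreover from this have "translates_union X K \<in> translate_patterns h g n"
      using A(1) unfolding translate_patterns_def by blast
    ultimately show False using A(2) by blast
  qed
  then show ?thesis using A by blast
qed

lemma few_patterns_if_le_half_powr:
  fixes h g n m :: nat
  assumes "2 \<le> h" "2 \<le> g" "1 \<le> n"
    and m: "real m \<le> real n powr ((real h - 1) * (real g - 1) / (real h * real g - 1)) / 2"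
  shows "2 * real n ^ (h + g - 1) * real m ^ (h * g - 1) \<le> real n ^ (h * g)"
proof -
  define k where "k = h * g - 1"
  define a where "a = (h - 1) * (g - 1)"
  have exponents: "h + g - 1 + a = h * g"
    using assms(1,2) unfolding a_def by (cases h; cases g) (auto simp: algebra_simps)
  have "4 \<le> h * g" using mult_le_mono[OF assms(1,2)] by simp
  then have "real k = real (h * g) - 1" unfolding k_def by (metis of_nat_1 of_nat_diff le_trans one_le_numeral)
  then have k: "real k = real h * real g - 1" by simp
  have "2 \<le> k" using \<open>4 \<le> h * g\<close> unfolding k_def by linarith
  have "real a = (real h - 1) * (real g - 1)" using assms(1,2) by (simp add: a_def of_nat_diff)
  then have "real k * ((real h - 1) * (real g - 1) / (real h * real g - 1)) = real a"
    using k \<open>2 \<le> k\<close> by simp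
  then have "(real n powr ((real h - 1) * (real g - 1) / (real h * real g - 1))) ^ k = real n ^ a"
    using assms(3) by (simp add: powr_power powr_realpow)
  then have "real m ^ k \<le> real n ^ a / 2 ^ k"
    using power_mono[OF m, of k] by (simp add: power_divide)
  also have "\<dots> \<le> real n ^ a / 2"
    using \<open>2 \<le> k\<close> power_increasing[of 1 k "2::real"] by (intro divide_left_mono) auto
  finally have "2 * real m ^ k \<le> real n ^ a" by simp
  then have "real n ^ (h + g - 1) * (2 * real m ^ k) \<le> real n ^ (h + g - 1) * real n ^ a"
    by (intro mult_left_mono) auto
  also have "\<dots> = real n ^ (h * g)" using exponents by (metis power_add)
  finally show ?thesis by (simp add: k_def mult_ac)
qed

lemma exists_large_weak_Ch_g_subset:
  assumes "2 \<le> h" "2 \<le> g" "1 \<le> n"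
  shows "\<exists>A\<subseteq>{1..int n}. weak_Ch_g h g A \<and>
    real n powr ((real h - 1) * (real g - 1) / (real h * real g - 1)) / 8 \<le> real (card A)"
proof -
  define x where "x = real n powr ((real h - 1) * (real g - 1) / (real h * real g - 1))"
  have hg: "4 \<le> h * g" using mult_le_mono[OF assms(1,2)] by simp
  show ?thesis
  proof (cases "x < 4")
    case True
    have "weak_Ch_g h g {1}" using hg by (intro weak_Ch_g_if_card_less) auto
    moreover have "{1} \<subseteq> {1..int n}" using assms(3) by simp
    ultimately show ?thesis using True unfolding x_def by (intro exI[of _ "{1}"]) simp
  next
    case False
    define m where "m = nat \<lfloor>x / 2\<rfloor>"
    have m: "real m \<le> x / 2" "x / 2 - 1 \<le> real m" using False unfolding m_def by linarith+
    have "real h * real g \<ge> 4" using hg by (metis of_nat_mult of_nat_le_iff of_nat_numeral)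
    moreover have "(real h - 1) * (real g - 1) = real h * real g - real h - real g + 1"
      by (simp add: algebra_simps)
    ultimately have "(real h - 1) * (real g - 1) / (real h * real g - 1) \<le> 1"
      using assms(1,2) by (simp add: divide_le_eq_1)
    then have "x \<le> real n powr 1" unfolding x_def using assms(3) by (intro powr_mono) auto
    then have "m \<le> n" using m(1) by simp
    have "2 * real n ^ (h + g - 1) * real m ^ (h * g - 1) \<le> real n ^ (h * g)"
      using m(1) unfolding x_def by (rule few_patterns_if_le_half_powr[OF assms])
    moreover have "1 \<le> h" "1 \<le> g" using assms(1,2) by simp_all
    ultimately obtain A where A: "A \<subseteq> {1..int n}" "weak_Ch_g h g A" "real m / 2 \<le> real (card A)"
      using exists_weak_Ch_g_subset[of h g n m] assms(3) \<open>m \<le> n\<close> by blast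
    moreover have "x / 8 \<le> real m / 2" using m(2) False by linarith
    ultimately show ?thesis unfolding x_def by (intro exI[of _ A]) simp
  qed
qed

theorem theorem2:
  fixes g h :: nat
  assumes "h \<ge> 2" and "g \<ge> h"
  shows "\<exists>c::real. c > 0 \<and>
           (\<forall>n::nat. n \<ge> 1 \<longrightarrow>
              (\<exists>A::int set. A \<subseteq> {1..int n} \<and> weak_Ch_g h g A \<and>
                 real (card A) \<ge> c * real n powr
                   ((1 - 1 / real h) * (1 - 1 / real g) * (1 + 1 / (real h * real g - 1)))))"
proof -
  have "g \<ge> 2" using assms by simp
  then have "real h * real g \<ge> 2 * 2" using assms(1) by (intro mult_mono) auto
  moreover have "real h \<noteq> 0" "real g \<noteq> 0" using assms \<open>g \<ge> 2\<close> by simp_all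
  ultimately have exponent: "(1 - 1 / real h) * (1 - 1 / real g) * (1 + 1 / (real h * real g - 1))
      = (real h - 1) * (real g - 1) / (real h * real g - 1)"
    by (simp add: field_simps)
  show ?thesis unfolding exponent
  proof (intro exI[of _ "1/8"] conjI allI impI)
    fix n :: nat assume "n \<ge> 1"
    from exists_large_weak_Ch_g_subset[OF assms(1) \<open>g \<ge> 2\<close> this] obtain A where
      "A \<subseteq> {1..int n}" "weak_Ch_g h g A"
      "real n powr ((real h - 1) * (real g - 1) / (real h * real g - 1)) / 8 \<le> real (card A)"
      by blast
    then show "\<exists>A. A \<subseteq> {1..int n} \<and> weak_Ch_g h g A \<and>
        1 / 8 * real n powr ((real h - 1) * (real g - 1) / (real h * real g - 1)) \<le> real (card A)"
      by (intro exI[of _ A]) simp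
  qed simp
qed

end
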